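(* Let $g:\mathbb{R}\to[0,+\infty)$ be lower semicontinuous and assume there are $a_1>0$, $a_2\in\mathbb{R}$ with $g(\delta)\ge a_1|\delta|+a_2$ for all $\delta\in\mathbb{R}$. Let $f:\mathbb{R}^{N\times N}\to[0,+\infty)$, $f(\xi)=g(\det\xi)$. If $f$ is ${\rm curl}$-$\infty$ quasiconvex, then $g$ is level convex; hence $f$ is polyquasiconvex.
   Context: $Q:=(-\tfrac12,\tfrac12)^N$. A non-negative Borel $f:\mathbb{R}^{N\times N}\to[0,\infty)$ is ${\rm curl}$-$\infty$ quasiconvex if $f(\xi)=\lim_{p\to\infty}\inf\{(\int_Qf^p(\xi+Du(x))dx)^{1/p}:u\in W^{1,\infty}_{\rm per}(Q;\mathbb{R}^N)\}$ for every $\xi$, with $W^{1,\infty}_{\rm per}$ the $Q$-periodic functions in $W^{1,\infty}(\mathbb{R}^N;\mathbb{R}^N)$. Level convex: $g(\lambda s+(1-\lambda)t)\le\max\{g(s),g(t)\}$. Polyquasiconvex: $f=h\circ T$ with $h$ level convex and $T(\xi)$ the vector of all minors of $\xi$. *)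

theory Defs
  imports "HOL-Analysis.Analysis"
begin

definition lsc :: "(real \<Rightarrow> real) \<Rightarrow> bool" where
  "lsc g \<longleftrightarrow> (\<forall>x c. c < g x \<longrightarrow> (\<forall>\<^sub>F y in at x. c < g y))"

definition level_convex_real :: "(real \<Rightarrow> real) \<Rightarrow> bool" where
  "level_convex_real g \<longleftrightarrow>
     (\<forall>s t l. 0 \<le> l \<and> l \<le> 1 \<longrightarrow> g (l * s + (1 - l) * t) \<le> max (g s) (g t))"

definition Qcube :: "(real^'n) set" where
  "Qcube = {x. \<forall>i. - 1/2 < x $ i \<and> x $ i < 1/2}"

text \<open>Q-periodic W^{1,infinity} maps: bounded, Lipschitz, 1-periodic in every coordinate.\<close>
definition W1inf_per :: "((real^'n) \<Rightarrow> (real^'n)) set" where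
  "W1inf_per = {u. bounded (range u) \<and> (\<exists>L. L-lipschitz_on UNIV u)
                  \<and> (\<forall>x i. u (x + axis i 1) = u x)}"

text \<open>Gradient (Jacobian matrix, (Du)_{ij} = d u_i / d x_j), defined a.e. by Rademacher.\<close>
definition Dmat :: "((real^'n) \<Rightarrow> (real^'n)) \<Rightarrow> real^'n \<Rightarrow> real^'n^'n" where
  "Dmat u x = matrix (frechet_derivative u (at x))"

definition Lp_term :: "real \<Rightarrow> (real^'n^'n \<Rightarrow> real) \<Rightarrow> real^'n^'n \<Rightarrow> ((real^'n) \<Rightarrow> (real^'n)) \<Rightarrow> ennreal" where
  "Lp_term p f \<xi> u =
     (let I = (\<integral>\<^sup>+ x \<in> Qcube. ennreal (f (\<xi> + Dmat u x) powr p) \<partial>lborel)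
      in if I = \<infinity> then \<infinity> else ennreal (enn2real I powr (1 / p)))"

definition curl_inf_qc :: "(real^'n^'n \<Rightarrow> real) \<Rightarrow> bool" where
  "curl_inf_qc f \<longleftrightarrow>
     (\<forall>\<xi>. ((\<lambda>p. INF u \<in> W1inf_per. Lp_term p f \<xi> u) \<longlongrightarrow> ennreal (f \<xi>)) at_top)"

text \<open>Minors: for I, J index sets of equal positive cardinality, the determinant of the
  submatrix with rows I, columns J (both in increasing order), via the Leibniz formula.\<close>
definition inversions :: "('n::{finite,linorder} \<Rightarrow> 'n) \<Rightarrow> 'n set \<Rightarrow> nat" where
  "inversions \<sigma> I = card {(i, i'). i \<in> I \<and> i' \<in> I \<and> i < i' \<and> \<sigma> i' < \<sigma> i}"

definition minor :: "((real, 'n::{finite,linorder}) vec, 'n) vec \<Rightarrow> 'n set \<Rightarrow> 'n set \<Rightarrow> real" where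
  "minor \<xi> I J = (\<Sum>\<sigma> \<in> {\<sigma>. bij_betw \<sigma> I J \<and> \<sigma> \<in> extensional I}.
                      (- 1) ^ inversions \<sigma> I * (\<Prod>i\<in>I. \<xi> $ i $ \<sigma> i))"

text \<open>T(xi): vector of all minors, indexed by pairs (I,J) with card I = card J >= 1
  (coordinates outside this index set are 0).\<close>
definition minors_vec :: "((real, 'n::{finite,linorder}) vec, 'n) vec \<Rightarrow> 'n set \<times> 'n set \<Rightarrow> real" where
  "minors_vec \<xi> = (\<lambda>(I, J). if card I = card J \<and> I \<noteq> {} then minor \<xi> I J else 0)"

definition level_convex_fun :: "(('a \<Rightarrow> real) \<Rightarrow> real) \<Rightarrow> bool" where
  "level_convex_fun h \<longleftrightarrow>
     (\<forall>s t l. 0 \<le> l \<and> l \<le> 1 \<longrightarrow>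
        h (\<lambda>k. l * s k + (1 - l) * t k) \<le> max (h s) (h t))"

definition polyquasiconvex :: "(((real, 'n::{finite,linorder}) vec, 'n) vec \<Rightarrow> real) \<Rightarrow> bool" where
  "polyquasiconvex f \<longleftrightarrow>
     (\<exists>h :: ('n set \<times> 'n set \<Rightarrow> real) \<Rightarrow> real.
        level_convex_fun h \<and> (\<forall>\<xi>. f \<xi> = h (minors_vec \<xi>)))"

end

(*
  For s < t and 0 < l < 1 put \<delta> = l s + (1 - l) t, a = \<delta> - s, b = t - \<delta>, and let \<psi> be the
  1-periodic sawtooth of slope a on [0, l] and slope -b on [l, 1]. The periodic Lipschitz map
  u(x) = -\<psi>(x_k) e_k has Du = -a e_k \<otimes> e_k or b e_k \<otimes> e_k almost everywhere, so for
  \<xi> = diag(\<delta>, 1, ..., 1) the determinant det (\<xi> + Du) is s or t almost everywhere. Each L^p mean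
  of f(\<xi> + Du) is then at most max (g s) (g t), and curl-\<infinity> quasiconvexity gives
  g \<delta> = f \<xi> \<le> max (g s) (g t). Since det is the minor of maximal order, f = h \<circ> T with
  h v = g (v (UNIV, UNIV)), which is level convex together with g.
*)

theory Submission
  imports Defs
begin

definition order_sign :: "'a::linorder \<Rightarrow> 'a \<Rightarrow> int" where
  "order_sign x y = (if x < y then 1 else -1)"

(* (-1)^(inversions \<sigma>) as a product over pairs i < j: in this form multiplicativity is a
   reindexing of the pairs, which links the inversion count in minor to the library's sign. *)
definition pair_sign :: "('a::{finite,linorder} \<Rightarrow> 'a) \<Rightarrow> int" where
  "pair_sign \<sigma> = (\<Prod>(i, j)\<in>{(i, j). i < j}. order_sign (\<sigma> i) (\<sigma> j))"

lemma prod_if_neg_one_eq_power_card: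
  assumes "finite A"
  shows "(\<Prod>x\<in>A. if P x then -1 else 1) = (-1::int) ^ card {x\<in>A. P x}"
  using prod.If_cases[OF assms, of P "\<lambda>_. -1::int" "\<lambda>_. 1"] by (simp add: Int_def conj_commute)

lemma power_inversions_eq_pair_sign:
  fixes \<sigma> :: "'a::{finite,linorder} \<Rightarrow> 'a"
  assumes "inj \<sigma>"
  shows "(-1::int) ^ inversions \<sigma> UNIV = pair_sign \<sigma>"
proof -
  have "pair_sign \<sigma> = (\<Prod>p\<in>{(i, j). i < j}. if \<sigma> (snd p) < \<sigma> (fst p) then -1 else 1)"
    unfolding pair_sign_def using assms
    by (intro prod.cong) (auto simp: order_sign_def inj_eq less_le)
  also have "\<dots> = (-1) ^ card {p\<in>{(i, j). i < j}. \<sigma> (snd p) < \<sigma> (fst p)}"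
    by (rule prod_if_neg_one_eq_power_card) simp
  also have "{p\<in>{(i, j). i < j}. \<sigma> (snd p) < \<sigma> (fst p)}
      = {(i, i'). i \<in> UNIV \<and> i' \<in> UNIV \<and> i < i' \<and> \<sigma> i' < \<sigma> i}"
    by auto
  finally show ?thesis unfolding inversions_def ..
qed

lemma prod_ordered_pairs_reindex:
  fixes \<tau> :: "'a::{finite,linorder} \<Rightarrow> 'a" and F :: "'a \<Rightarrow> 'a \<Rightarrow> 'b::comm_monoid_mult"
  assumes "bij \<tau>" and F_sym: "\<And>x y. x \<noteq> y \<Longrightarrow> F x y = F y x"
  shows "(\<Prod>(i, j)\<in>{(i, j). i < j}. F (\<tau> i) (\<tau> j)) = (\<Prod>(i, j)\<in>{(i, j). i < j}. F i j)"
proof -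
  define m where "m \<phi> = (\<lambda>(i, j). (min (\<phi> i) (\<phi> j), max (\<phi> i) (\<phi> j)))" for \<phi> :: "'a \<Rightarrow> 'a"
  have inj: "inj \<tau>" "inj (inv \<tau>)" using assms(1) bij_is_inj bij_imp_bij_inv by blast+
  have "(\<Prod>(i, j)\<in>{(i, j). i < j}. F (\<tau> i) (\<tau> j)) = (\<Prod>p\<in>{(i, j). i < j}. case_prod F (m \<tau> p))"
    using F_sym by (intro prod.cong) (auto simp: m_def min_def max_def)
  also have "\<dots> = (\<Prod>(i, j)\<in>{(i, j). i < j}. F i j)"
  proof (rule prod.reindex_bij_witness[where i = "m (inv \<tau>)" and j = "m \<tau>"])
    show "m \<tau> p \<in> {(i, j). i < j}" if "p \<in> {(i, j). i < j}" for p
      using that inj(1) by (auto simp: m_def min_def max_def inj_eq less_le split: if_splits)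
    show "m (inv \<tau>) q \<in> {(i, j). i < j}" if "q \<in> {(i, j). i < j}" for q
      using that inj(2) by (auto simp: m_def min_def max_def inj_eq less_le split: if_splits)
    show "m (inv \<tau>) (m \<tau> p) = p" if "p \<in> {(i, j). i < j}" for p
      using that inj(1) by (auto simp: m_def min_def max_def)
    show "m \<tau> (m (inv \<tau>) q) = q" if "q \<in> {(i, j). i < j}" for q
      using that bij_is_surj[OF assms(1)] by (auto simp: m_def min_def max_def surj_f_inv_f)
  qed simp
  finally show ?thesis .
qed

lemma pair_sign_compose:
  fixes \<sigma> \<tau> :: "'a::{finite,linorder} \<Rightarrow> 'a"
  assumes "inj \<sigma>" "bij \<tau>"
  shows "pair_sign (\<sigma> \<circ> \<tau>) = pair_sign \<sigma> * pair_sign \<tau>"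
proof -
  define F where "F x y = order_sign (\<sigma> x) (\<sigma> y) * order_sign x y" for x y
  have F_sym: "F x y = F y x" if "x \<noteq> y" for x y
    using that assms(1) by (auto simp: F_def order_sign_def inj_eq)
  have "order_sign (\<sigma> x) (\<sigma> y) = F x y * order_sign x y" for x y
    by (simp add: F_def order_sign_def)
  then have "pair_sign (\<sigma> \<circ> \<tau>) = (\<Prod>(i, j)\<in>{(i, j). i < j}. F (\<tau> i) (\<tau> j)) * pair_sign \<tau>"
    unfolding pair_sign_def by (simp add: case_prod_beta prod.distrib)
  also have "(\<Prod>(i, j)\<in>{(i, j). i < j}. F (\<tau> i) (\<tau> j)) = (\<Prod>(i, j)\<in>{(i, j). i < j}. F i j)"
    by (rule prod_ordered_pairs_reindex[OF assms(2) F_sym])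
  also have "\<dots> = pair_sign \<sigma>"
    unfolding pair_sign_def F_def by (intro prod.cong) (auto simp: order_sign_def)
  finally show ?thesis .
qed

lemma inversions_transpose:
  fixes a b :: "'a::{finite,linorder}"
  assumes "a < b"
  shows "inversions (Transposition.transpose a b) UNIV = Suc (2 * card {a<..<b})"
proof -
  let ?M = "{a<..<b}"
  have "{(i, i'). i \<in> UNIV \<and> i' \<in> UNIV \<and> i < i' \<and> Transposition.transpose a b i' < Transposition.transpose a b i}
      = insert (a, b) (Pair a ` ?M \<union> (\<lambda>x. (x, b)) ` ?M)"
    using assms by (auto simp: Transposition.transpose_def image_iff split: if_splits)
  moreover have "card (Pair a ` ?M \<union> (\<lambda>x. (x, b)) ` ?M) = card ?M + card ?M"
    by (subst card_Un_disjoint) (auto simp: card_image inj_on_def)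
  moreover have "(a, b) \<notin> Pair a ` ?M \<union> (\<lambda>x. (x, b)) ` ?M"
    by auto
  ultimately show ?thesis
    unfolding inversions_def by simp
qed

lemma pair_sign_transpose:
  fixes a b :: "'a::{finite,linorder}"
  assumes "a < b"
  shows "pair_sign (Transposition.transpose a b) = -1"
  using power_inversions_eq_pair_sign[of "Transposition.transpose a b"]
  by (simp add: inversions_transpose[OF assms])

lemma pair_sign_eq_sign:
  fixes p :: "'a::{finite,linorder} \<Rightarrow> 'a"
  assumes "permutation p"
  shows "pair_sign p = sign p"
proof -
  have "pair_sign p = (-1) ^ n" if "swapidseq n p" for n
    using that
  proof (induction rule: swapidseq.induct)
    case id
    show ?case by (simp add: pair_sign_def order_sign_def case_prod_beta)
  next
    case (comp_Suc n p a b)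
    have "bij p"
      using comp_Suc(1) permutation_bijective permutation_def by blast
    moreover have "pair_sign (Transposition.transpose a b) = -1"
      using comp_Suc(2) pair_sign_transpose[of a b] pair_sign_transpose[of b a]
      by (cases "a < b") (auto simp: transpose_commute)
    ultimately show ?case
      using comp_Suc(3) pair_sign_compose[of "Transposition.transpose a b" p] by (simp add: comp_def)
  qed
  with assms show ?thesis
    unfolding permutation_def sign_def by (metis evenperm_unique neg_one_even_power neg_one_odd_power)
qed

definition wedge :: "real \<Rightarrow> real \<Rightarrow> real \<Rightarrow> real" where
  "wedge a b z = max (a * z) (- (b * z))"

(* An infimum of integer translates of the wedge, so that it inherits the wedge's Lipschitz bound. *)
definition sawtooth :: "real \<Rightarrow> real \<Rightarrow> real \<Rightarrow> real" where
  "sawtooth a b y = Inf (range (\<lambda>j::int. wedge a b (y - of_int j)))"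

lemma wedge_nonneg: "0 \<le> a \<Longrightarrow> 0 \<le> b \<Longrightarrow> 0 \<le> wedge a b z"
  using mult_nonneg_nonneg[of a z] mult_nonneg_nonpos[of b z]
  by (cases "0 \<le> z") (auto simp: wedge_def le_max_iff_disj)

lemma wedge_lipschitz:
  assumes "0 \<le> a" "0 \<le> b"
  shows "wedge a b z \<le> wedge a b w + (a + b) * \<bar>z - w\<bar>"
proof -
  have "a * (z - w) \<le> (a + b) * \<bar>z - w\<bar>" "b * (w - z) \<le> (a + b) * \<bar>z - w\<bar>"
    using assms abs_ge_self[of "z - w"] abs_ge_minus_self[of "z - w"]
    by (smt (verit, best) mult_left_mono mult_right_mono)+
  then show ?thesis
    unfolding wedge_def by (auto simp: max_def algebra_simps)
qed

lemma sawtooth_le_wedge: "0 \<le> a \<Longrightarrow> 0 \<le> b \<Longrightarrow> sawtooth a b y \<le> wedge a b (y - of_int j)"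
  unfolding sawtooth_def by (rule cInf_lower) (auto intro: bdd_belowI[where m = 0] wedge_nonneg)

lemma sawtooth_greatest: "(\<And>j::int. c \<le> wedge a b (y - of_int j)) \<Longrightarrow> c \<le> sawtooth a b y"
  unfolding sawtooth_def by (rule cInf_greatest) auto

lemma sawtooth_eq_min:
  assumes "0 \<le> a" "0 \<le> b"
  shows "sawtooth a b y = min (a * frac y) (b * (1 - frac y))"
proof (rule antisym)
  have "y - of_int \<lfloor>y\<rfloor> = frac y" "y - of_int (\<lfloor>y\<rfloor> + 1) = frac y - 1"
    by (simp_all add: frac_def)
  moreover have "0 \<le> a * frac y" "0 \<le> b * frac y" "0 \<le> a * (1 - frac y)" "0 \<le> b * (1 - frac y)"
    using assms frac_ge_0[of y] frac_lt_1[of y] by simp_all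
  then have "wedge a b (frac y) = a * frac y" "wedge a b (frac y - 1) = b * (1 - frac y)"
    by (auto simp: wedge_def max_def algebra_simps)
  ultimately have "wedge a b (y - of_int \<lfloor>y\<rfloor>) = a * frac y"
    and "wedge a b (y - of_int (\<lfloor>y\<rfloor> + 1)) = b * (1 - frac y)"
    by (simp_all only:)
  then show "sawtooth a b y \<le> min (a * frac y) (b * (1 - frac y))"
    using sawtooth_le_wedge[OF assms, of y] by (metis min.boundedI)
  show "min (a * frac y) (b * (1 - frac y)) \<le> sawtooth a b y"
  proof (rule sawtooth_greatest)
    fix j :: int
    show "min (a * frac y) (b * (1 - frac y)) \<le> wedge a b (y - of_int j)"
    proof (cases "j \<le> \<lfloor>y\<rfloor>")
      case True
      then have "frac y \<le> y - of_int j"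
        by (simp add: frac_def)
      then have "a * frac y \<le> a * (y - of_int j)"
        using assms by (simp add: mult_left_mono)
      then show ?thesis unfolding wedge_def by linarith
    next
      case False
      then have "1 - frac y \<le> of_int j - y"
        by (simp add: frac_def)
      then have "b * (1 - frac y) \<le> b * (of_int j - y)"
        using assms by (simp add: mult_left_mono)
      then have "b * (1 - frac y) \<le> - (b * (y - of_int j))"
        by (simp add: algebra_simps)
      then show ?thesis unfolding wedge_def by linarith
    qed
  qed
qed

lemma sawtooth_lipschitz:
  assumes "0 \<le> a" "0 \<le> b"
  shows "\<bar>sawtooth a b x - sawtooth a b y\<bar> \<le> (a + b) * \<bar>x - y\<bar>"
proof -
  have "sawtooth a b x \<le> sawtooth a b y + (a + b) * \<bar>x - y\<bar>" for x y
  proof -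
    have "sawtooth a b x - (a + b) * \<bar>x - y\<bar> \<le> sawtooth a b y"
    proof (rule sawtooth_greatest)
      fix j :: int
      have "sawtooth a b x \<le> wedge a b (y - of_int j) + (a + b) * \<bar>x - y\<bar>"
        using sawtooth_le_wedge[OF assms, of x j] wedge_lipschitz[OF assms, of "x - of_int j" "y - of_int j"]
        by simp
      then show "sawtooth a b x - (a + b) * \<bar>x - y\<bar> \<le> wedge a b (y - of_int j)"
        by simp
    qed
    then show ?thesis by simp
  qed
  from this[of x y] this[of y x] show ?thesis
    by (simp add: abs_minus_commute)
qed

lemma sawtooth_has_real_derivative:
  assumes "0 < a" "0 < b" and y: "frac y \<noteq> 0" "frac y \<noteq> b / (a + b)"
  shows "(sawtooth a b has_real_derivative (if frac y < b / (a + b) then a else - b)) (at y)"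
proof -
  define l where "l = b / (a + b)"
  have l: "0 < l" "l < 1" "a * l = b * (1 - l)"
    using assms by (auto simp: l_def field_simps)
  have min_eq: "min (a * f) (b * (1 - f)) = (if f \<le> l then a * f else b * (1 - f))" for f
  proof -
    have "a * f \<le> b * (1 - f) \<longleftrightarrow> (a + b) * f \<le> (a + b) * l"
      using l(3) by (simp add: algebra_simps)
    then show ?thesis
      using assms by (simp add: min_def)
  qed
  define c where "c = \<lfloor>y\<rfloor>"
  have frac_local: "frac z = z - of_int c" if "of_int c \<le> z" "z < of_int c + 1" for z
    using floor_unique[OF that] by (simp add: frac_def)
  show ?thesis
  proof (cases "frac y < l")
    case True
    have "((\<lambda>z. a * (z - of_int c)) has_real_derivative a) (at y)"
      by (auto intro!: derivative_eq_intros)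
    moreover have "y \<in> {of_int c<..<of_int c + l}"
      using True y(1) by (auto simp: c_def frac_def less_le)
    moreover have "a * (z - of_int c) = sawtooth a b z" if "z \<in> {of_int c<..<of_int c + l}" for z
      using that l frac_local[of z] assms by (simp add: sawtooth_eq_min min_eq)
    ultimately have "(sawtooth a b has_real_derivative a) (at y)"
      by (rule has_field_derivative_transform_within_open[OF _ open_greaterThanLessThan])
    with True show ?thesis
      by (simp add: l_def)
  next
    case False
    have "((\<lambda>z. b * (1 - (z - of_int c))) has_real_derivative - b) (at y)"
      by (auto intro!: derivative_eq_intros)
    moreover have "y \<in> {of_int c + l<..<of_int c + 1}"
      using False y(2) by (auto simp: c_def frac_def l_def)
    moreover have "b * (1 - (z - of_int c)) = sawtooth a b z" if "z \<in> {of_int c + l<..<of_int c + 1}" for z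
      using that l frac_local[of z] assms by (simp add: sawtooth_eq_min min_eq)
    ultimately have "(sawtooth a b has_real_derivative - b) (at y)"
      by (rule has_field_derivative_transform_within_open[OF _ open_greaterThanLessThan])
    with False show ?thesis
      by (simp add: l_def)
  qed
qed

lemma norm_axis_real: "norm (axis k (c::real)) = \<bar>c\<bar>"
proof -
  have "axis k c = c *\<^sub>R axis k 1"
    by (simp add: vec_eq_iff axis_def)
  then show ?thesis by simp
qed

lemma bounded_linear_axis: "bounded_linear (axis k :: real \<Rightarrow> real^'n::finite)"
  by (simp add: linear_conv_bounded_linear[symmetric] linear_iff vec_eq_iff axis_def)

definition single_entry :: "'n::finite \<Rightarrow> real \<Rightarrow> real^'n^'n" where
  "single_entry k m = (\<chi> i j. if i = k \<and> j = k then m else 0)"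

lemma single_entry_0 [simp]: "single_entry k 0 = 0"
  by (simp add: single_entry_def vec_eq_iff)

lemma single_entry_add: "single_entry k m + single_entry k m' = single_entry k (m + m')"
  by (simp add: single_entry_def vec_eq_iff)

lemma det_mat_1_add_single_entry: "det (mat 1 + single_entry k d :: real^'n::finite^'n) = 1 + d"
proof -
  have "det (mat 1 + single_entry k d :: real^'n^'n) = (\<Prod>i\<in>UNIV. (mat 1 + single_entry k d) $ i $ i)"
    by (rule det_diagonal) (auto simp: mat_def single_entry_def)
  also have "\<dots> = (\<Prod>i\<in>UNIV. if i = k then 1 + d else 1)"
    by (intro prod.cong) (auto simp: mat_def single_entry_def)
  finally show ?thesis by simp
qed

lemma Dmat_axis_comp:
  fixes x :: "real^'n::finite"
  assumes "(\<phi> has_real_derivative m) (at (x $ k))"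
  shows "Dmat (\<lambda>z. axis k (\<phi> (z $ k))) x = single_entry k m"
proof -
  have "((\<lambda>z. \<phi> (z $ k)) has_derivative (\<lambda>h. m * h $ k)) (at x)"
    using has_derivative_compose[OF bounded_linear_imp_has_derivative[OF bounded_linear_vec_nth]
        assms[unfolded has_field_derivative_def]] .
  then have "((\<lambda>z. axis k (\<phi> (z $ k))) has_derivative (\<lambda>h. axis k (m * h $ k))) (at x)"
    by (rule bounded_linear.has_derivative[OF bounded_linear_axis])
  then show ?thesis
    unfolding Dmat_def single_entry_def
    by (simp add: frechet_derivative_at[symmetric] matrix_def vec_eq_iff axis_def)
qed

definition sawtooth_field :: "'n::finite \<Rightarrow> real \<Rightarrow> real \<Rightarrow> real^'n \<Rightarrow> real^'n" where
  "sawtooth_field k a b x = axis k (- sawtooth a b (x $ k))"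

lemma sawtooth_field_in_W1inf_per:
  fixes k :: "'n::finite"
  assumes "0 \<le> a" "0 \<le> b"
  shows "sawtooth_field k a b \<in> W1inf_per"
proof -
  have "\<bar>sawtooth a b y\<bar> \<le> a" for y
    using assms frac_ge_0[of y] frac_lt_1[of y] mult_left_le[of "frac y" a]
    by (auto simp: sawtooth_eq_min min_def)
  then have "bounded (range (sawtooth_field k a b))"
    unfolding bounded_iff by (auto simp: sawtooth_field_def norm_axis_real)
  moreover have "(a + b)-lipschitz_on UNIV (sawtooth_field k a b)"
  proof (rule lipschitz_onI)
    fix x y :: "real^'n"
    have "dist (sawtooth_field k a b x) (sawtooth_field k a b y) = \<bar>sawtooth a b (x $ k) - sawtooth a b (y $ k)\<bar>"
    proof -
      have "sawtooth_field k a b x - sawtooth_field k a b y = axis k (sawtooth a b (y $ k) - sawtooth a b (x $ k))"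
        by (simp add: sawtooth_field_def vec_eq_iff axis_def)
      then show ?thesis
        by (simp add: dist_norm norm_axis_real abs_minus_commute)
    qed
    also have "\<dots> \<le> (a + b) * \<bar>x $ k - y $ k\<bar>"
      by (rule sawtooth_lipschitz[OF assms])
    also have "\<dots> \<le> (a + b) * dist x y"
      using assms component_le_norm_cart[of "x - y" k] by (simp add: dist_norm mult_left_mono)
    finally show "dist (sawtooth_field k a b x) (sawtooth_field k a b y) \<le> (a + b) * dist x y" .
  qed (use assms in simp)
  moreover have "sawtooth_field k a b (x + axis i 1) = sawtooth_field k a b x" for x i
    using assms by (cases "i = k") (simp_all add: sawtooth_field_def sawtooth_eq_min frac_1_eq axis_def)
  ultimately show ?thesis
    unfolding W1inf_per_def by blast
qed

lemma null_sets_component_in_countable: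
  fixes k :: "'n::finite"
  assumes "countable C"
  shows "{x::real^'n. x $ k \<in> C} \<in> null_sets lborel"
proof -
  have hyperplane: "{x::real^'n. axis k 1 \<bullet> x = c} \<in> null_sets lborel" for c
  proof -
    have "negligible {x::real^'n. axis k 1 \<bullet> x = c}"
      by (rule negligible_hyperplane) simp
    moreover have "{x::real^'n. axis k 1 \<bullet> x = c} \<in> sets lborel"
      unfolding sets_lborel by (intro borel_closed closed_hyperplane)
    ultimately show ?thesis
      by (simp add: negligible_iff_null_sets null_sets_completion_iff)
  qed
  have "{x::real^'n. x $ k \<in> C} = (\<Union>c\<in>C. {x. axis k 1 \<bullet> x = c})"
    by (auto simp: cart_eq_inner_axis inner_commute)
  also have "\<dots> \<in> null_sets lborel"
    using assms hyperplane by (rule null_sets_UN')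
  finally show ?thesis .
qed

lemma Qcube_eq_box: "Qcube = box (\<chi> i. - 1/2) (\<chi> i. 1/2 :: real^'n::finite)"
  unfolding Qcube_def by (simp add: set_eq_iff mem_box_cart)

lemma emeasure_Qcube: "emeasure lborel (Qcube :: (real^'n::finite) set) = 1"
proof -
  let ?l = "\<chi> i. - 1/2 :: real^'n" and ?u = "\<chi> i. 1/2 :: real^'n"
  have edge: "?l \<bullet> b \<le> ?u \<bullet> b" "(?u - ?l) \<bullet> b = 1" if "b \<in> Basis" for b
    using that by (auto simp: Basis_vec_def cart_eq_inner_axis[symmetric])
  then have "(\<Prod>b\<in>Basis. (?u - ?l) \<bullet> b) = 1"
    by (intro prod.neutral) blast
  with edge show ?thesis
    by (simp add: Qcube_eq_box emeasure_lborel_box_eq)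
qed

lemma Lp_term_le:
  fixes f :: "real^'n::finite^'n \<Rightarrow> real"
  assumes "0 < p" "0 \<le> M" and f_nonneg: "\<forall>\<xi>. 0 \<le> f \<xi>"
    and bound: "AE x in lborel. x \<in> Qcube \<longrightarrow> f (\<xi> + Dmat u x) \<le> M"
  shows "Lp_term p f \<xi> u \<le> ennreal M"
proof -
  define I where "I = (\<integral>\<^sup>+ x \<in> Qcube. ennreal (f (\<xi> + Dmat u x) powr p) \<partial>lborel)"
  have "AE x in lborel. ennreal (f (\<xi> + Dmat u x) powr p) * indicator Qcube x
      \<le> ennreal (M powr p) * indicator Qcube x"
    using bound
  proof (rule eventually_mono)
    fix x assume "x \<in> Qcube \<longrightarrow> f (\<xi> + Dmat u x) \<le> M"
    then have "x \<in> Qcube \<longrightarrow> f (\<xi> + Dmat u x) powr p \<le> M powr p"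
      using f_nonneg assms(1) by (auto intro: powr_mono2)
    then show "ennreal (f (\<xi> + Dmat u x) powr p) * indicator Qcube x \<le> ennreal (M powr p) * indicator Qcube x"
      by (auto simp: indicator_def ennreal_leI)
  qed
  then have "I \<le> (\<integral>\<^sup>+ x. ennreal (M powr p) * indicator (Qcube :: (real^'n) set) x \<partial>lborel)"
    unfolding I_def by (rule nn_integral_mono_AE)
  also have "\<dots> = ennreal (M powr p) * emeasure lborel (Qcube :: (real^'n) set)"
    by (rule nn_integral_cmult_indicator) (simp add: Qcube_eq_box)
  also have "\<dots> = ennreal (M powr p)"
    by (simp add: emeasure_Qcube)
  finally have I: "I \<le> ennreal (M powr p)" .
  then have "I \<noteq> \<infinity>"
    by (auto simp: top_unique)
  moreover have "enn2real I powr (1 / p) \<le> (M powr p) powr (1 / p)"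
    using I assms(1,2) by (intro powr_mono2) (auto simp: enn2real_leI)
  ultimately show ?thesis
    using assms(1,2) by (simp add: Lp_term_def I_def[symmetric] powr_powr ennreal_leI)
qed

lemma curl_inf_qc_le_AE_bound:
  fixes f :: "real^'n::finite^'n \<Rightarrow> real"
  assumes "curl_inf_qc f" "\<forall>\<xi>. 0 \<le> f \<xi>" "u \<in> W1inf_per" "0 \<le> M"
    and "AE x in lborel. x \<in> Qcube \<longrightarrow> f (\<xi> + Dmat u x) \<le> M"
  shows "f \<xi> \<le> M"
proof -
  have "((\<lambda>p. INF v \<in> W1inf_per. Lp_term p f \<xi> v) \<longlongrightarrow> ennreal (f \<xi>)) at_top"
    using assms(1) unfolding curl_inf_qc_def by blast
  moreover have "\<forall>\<^sub>F p in at_top. (INF v \<in> W1inf_per. Lp_term p f \<xi> v) \<le> ennreal M"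
    using eventually_gt_at_top[of 0]
  proof (rule eventually_mono)
    fix p :: real assume "0 < p"
    then have "Lp_term p f \<xi> u \<le> ennreal M"
      using assms(4,2,5) by (rule Lp_term_le)
    then show "(INF v \<in> W1inf_per. Lp_term p f \<xi> v) \<le> ennreal M"
      using assms(3) by (meson INF_lower order_trans)
  qed
  ultimately have "ennreal (f \<xi>) \<le> ennreal M"
    by (rule tendsto_upperbound) simp
  with assms(4) show ?thesis
    by simp
qed

lemma AE_Dmat_sawtooth_field:
  fixes k :: "'n::finite"
  assumes "0 < a" "0 < b"
  shows "AE x in lborel. Dmat (sawtooth_field k a b) x \<in> {single_entry k (- a), single_entry k b}"
proof -
  define C where "C = range real_of_int \<union> range (\<lambda>j. real_of_int j + b / (a + b))"
  have "countable C"
    unfolding C_def by simp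
  then have "AE x in lborel. x $ k \<notin> C"
    using AE_not_in[OF null_sets_component_in_countable[where k = k]] by simp
  then show ?thesis
  proof (rule eventually_mono)
    fix x :: "real^'n"
    assume "x $ k \<notin> C"
    moreover have "x $ k = of_int \<lfloor>x $ k\<rfloor> + frac (x $ k)"
      by (simp add: frac_def)
    ultimately have "frac (x $ k) \<noteq> 0" "frac (x $ k) \<noteq> b / (a + b)"
      unfolding C_def by (metis add.right_neutral rangeI UnI1, metis rangeI UnI2)
    then have "((\<lambda>y. - sawtooth a b y) has_real_derivative
        - (if frac (x $ k) < b / (a + b) then a else - b)) (at (x $ k))"
      by (intro DERIV_minus sawtooth_has_real_derivative assms)
    then show "Dmat (sawtooth_field k a b) x \<in> {single_entry k (- a), single_entry k b}"
      unfolding sawtooth_field_def by (auto dest: Dmat_axis_comp split: if_splits)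
  qed
qed

lemma curl_inf_qc_det_comp_le_max:
  fixes g :: "real \<Rightarrow> real" and f :: "real^'n::finite^'n \<Rightarrow> real"
  assumes g_nonneg: "\<forall>t. 0 \<le> g t" and f_def: "\<forall>\<xi>. f \<xi> = g (det \<xi>)" and qc: "curl_inf_qc f"
    and "s < t" "0 < l" "l < 1"
  shows "g (l * s + (1 - l) * t) \<le> max (g s) (g t)"
proof -
  fix k :: 'n
  define \<delta> where "\<delta> = l * s + (1 - l) * t"
  define a where "a = \<delta> - s"
  define b where "b = t - \<delta>"
  have "a = (1 - l) * (t - s)" "b = l * (t - s)"
    by (simp_all add: a_def b_def \<delta>_def algebra_simps)
  then have ab: "0 < a" "0 < b"
    using assms(4-6) by simp_all
  define \<xi> where "\<xi> = mat 1 + single_entry k (\<delta> - 1)"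
  have f_shift: "f (\<xi> + single_entry k m) = g (\<delta> + m)" for m
    by (simp add: f_def \<xi>_def add.assoc single_entry_add det_mat_1_add_single_entry)
  have "AE x in lborel. x \<in> Qcube \<longrightarrow> f (\<xi> + Dmat (sawtooth_field k a b) x) \<le> max (g s) (g t)"
    using AE_Dmat_sawtooth_field[OF ab, of k]
    by (rule eventually_mono) (auto simp: f_shift a_def b_def)
  moreover have "sawtooth_field k a b \<in> W1inf_per"
    using ab by (intro sawtooth_field_in_W1inf_per) simp_all
  ultimately have "f \<xi> \<le> max (g s) (g t)"
    using g_nonneg by (intro curl_inf_qc_le_AE_bound[OF qc]) (auto simp: f_def le_max_iff_disj)
  then show ?thesis
    using f_shift[of 0] by (simp add: \<delta>_def)
qed

lemma level_convex_real_of_curl_inf_qc_det_comp: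
  fixes g :: "real \<Rightarrow> real" and f :: "real^'n::finite^'n \<Rightarrow> real"
  assumes "\<forall>t. 0 \<le> g t" "\<forall>\<xi>. f \<xi> = g (det \<xi>)" "curl_inf_qc f"
  shows "level_convex_real g"
  unfolding level_convex_real_def
proof (intro allI impI)
  fix s t l :: real
  assume "0 \<le> l \<and> l \<le> 1"
  then consider "l = 0 \<or> l = 1 \<or> s = t" | "0 < l" "l < 1" "s < t" | "0 < l" "l < 1" "t < s"
    by (metis le_less linorder_neqE_linordered_idom)
  then show "g (l * s + (1 - l) * t) \<le> max (g s) (g t)"
  proof cases
    case 1
    then show ?thesis by (auto simp: algebra_simps)
  next
    case 2
    then show ?thesis by (intro curl_inf_qc_det_comp_le_max[OF assms])
  next
    case 3
    then have "g ((1 - l) * t + (1 - (1 - l)) * s) \<le> max (g t) (g s)"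
      by (intro curl_inf_qc_det_comp_le_max[OF assms]) simp_all
    then show ?thesis by (simp add: algebra_simps max.commute)
  qed
qed

lemma minor_UNIV_eq_det:
  fixes \<xi> :: "((real, 'n::{finite,linorder}) vec, 'n) vec"
  shows "minor \<xi> UNIV UNIV = det \<xi>"
proof -
  have perms: "{\<sigma>. bij_betw \<sigma> UNIV UNIV \<and> \<sigma> \<in> extensional UNIV} = {p. p permutes (UNIV :: 'n set)}"
    using bij_imp_permutes permutes_imp_bij by auto
  have "(-1) ^ inversions p UNIV = real_of_int (sign p)" if "p permutes UNIV" for p :: "'n \<Rightarrow> 'n"
  proof -
    have "permutation p"
      using that by (simp add: permutes_imp_permutation)
    then have "(-1) ^ inversions p UNIV = sign p"
      using power_inversions_eq_pair_sign pair_sign_eq_sign permutation_bijective bij_is_inj by metis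
    then show ?thesis
      by (metis of_int_minus of_int_1 of_int_power)
  qed
  then show ?thesis
    unfolding minor_def det_def perms by (intro sum.cong) simp_all
qed

lemma polyquasiconvex_det_comp:
  assumes "level_convex_real g" "\<forall>\<xi>. f \<xi> = g (det \<xi>)"
  shows "polyquasiconvex f"
  unfolding polyquasiconvex_def
proof (intro exI conjI allI)
  show "level_convex_fun (\<lambda>v. g (v (UNIV, UNIV)))"
    using assms(1) by (simp add: level_convex_fun_def level_convex_real_def)
  show "f \<xi> = g (minors_vec \<xi> (UNIV, UNIV))" for \<xi>
    using assms(2) by (simp add: minors_vec_def minor_UNIV_eq_det)
qed

theorem mainTheorem14:
  fixes g :: "real \<Rightarrow> real" and f :: "((real, 'n::{finite,linorder}) vec, 'n) vec \<Rightarrow> real"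
    and a1 a2 :: real
  assumes g_nonneg: "\<forall>t. 0 \<le> g t"
    and g_lsc: "lsc g"
    and a1_pos: "a1 > 0"
    and growth: "\<forall>\<delta>. g \<delta> \<ge> a1 * \<bar>\<delta>\<bar> + a2"
    and f_def: "\<forall>\<xi>. f \<xi> = g (det \<xi>)"
    and qc: "curl_inf_qc f"
  shows "level_convex_real g \<and> polyquasiconvex f"
proof
  show "level_convex_real g"
    using g_nonneg f_def qc by (rule level_convex_real_of_curl_inf_qc_det_comp)
  then show "polyquasiconvex f"
    using f_def by (rule polyquasiconvex_det_comp)
qed

end
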